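(* In the left-censored disclosure game described in the context, reparametrize by $\gamma=p/q>1$ and $\kappa=1/(1-p-q)>1$ (so that $(\gamma,\kappa)$ determines $(p,q)$), and consider, for fixed $e\in E$ and $\pi_0$, $$V(e)=\frac{1}{1+\frac{1-\pi_0}{\pi_0}\frac{p-\alpha}{q-\alpha}\left(\frac{q}{p}\right)^{N(e)+1}},\quad \alpha=\frac{1-\sqrt{1-4pq}}{2},\quad N(e)=\max_{0\le k\le L(e)}D(e|_k),$$ the sender's equilibrium value. Then: (1) $V(e)$ is decreasing in $\kappa$ (holding $\gamma$ fixed), for all $e\in E$. (2) If $N(e)=0$, $V(e)$ is decreasing in $\gamma$ (holding $\kappa$ fixed). If $N(e)>0$, there exists $\hat\gamma>1$ such that $V(e)$ is increasing in $\gamma$ when $\gamma>\hat\gamma$ (holding $\kappa$ fixed, for any $\kappa>1$), and the threshold $\hat\gamma\to1$ as $N(e)\to\infty$. (3) Fixing $e\in E$ and $q\in(0,\tfrac12)$, there exists $\hat p\in[q,1-q)$ such that, as a function of $p\in(q,1-q)$, $V(e)$ is increasing in $p$ for $p<\hat p$ and decreasing in $p$ for $p>\hat p$; moreover $\hat p$ is non-decreasing in $N(e)$.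
   Context: Left-censored disclosure game. A state $\omega\in\{G,B\}$ has prior probability $\pi_0\in(0,1)$ on $G$. The evidence space $E=\bigcup_{t\ge0}\{g,b\}^t$ is the set of finite sequences of signals in $\{g,b\}$, including the empty sequence $\emptyset$. For $e\in E$: $L(e)$ is its length, $G(e)$ and $B(e)$ the numbers of $g$'s and $b$'s, $D(e)=G(e)-B(e)$; for $e=(s_1,\dots,s_L)$ and $0<k\le L$, $e|_k=(s_{L-k+1},\dots,s_L)$, and $e|_0=\emptyset$. Parameters satisfy $1>p>q>0$ and $p+q<1$; evidence is drawn from $F_\omega$ with $F_G(e)=(1-p-q)p^{G(e)}q^{B(e)}$, $F_B(e)=(1-p-q)p^{B(e)}q^{G(e)}$. The disclosure rule allows a sender with evidence $e$ to send any message $e|_k$, $0\le k\le L(e)$. The receiver's optimal action equals his posterior belief on $G$, and the sender's payoff is the receiver's action. In this game the sender's value function (her payoff in any truth-leaning equilibrium) is given by the displayed formula for $V(e)$; $\gamma$ measures signal informativeness and $\kappa$ is the expected length of evidence. *)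

theory Defs
  imports "HOL-Analysis.Analysis"
begin

text \<open>Evidence: a finite sequence of signals; True encodes the signal g, False encodes b.\<close>
type_synonym evidence = "bool list"

definition Gcnt :: "evidence \<Rightarrow> nat" where
  "Gcnt e = length (filter (\<lambda>s. s) e)"

definition Bcnt :: "evidence \<Rightarrow> nat" where
  "Bcnt e = length (filter (\<lambda>s. \<not> s) e)"

definition Dval :: "evidence \<Rightarrow> int" where
  "Dval e = int (Gcnt e) - int (Bcnt e)"

definition restr :: "evidence \<Rightarrow> nat \<Rightarrow> evidence" where
  "restr e k = drop (length e - k) e"

definition Nval :: "evidence \<Rightarrow> int" where
  "Nval e = Max ((\<lambda>k. Dval (restr e k)) ` {0..length e})"

definition alpha :: "real \<Rightarrow> real \<Rightarrow> real" where
  "alpha p q = (1 - sqrt (1 - 4 * p * q)) / 2"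

definition Vval :: "real \<Rightarrow> real \<Rightarrow> real \<Rightarrow> evidence \<Rightarrow> real" where
  "Vval pi0 p q e =
     1 / (1 + (1 - pi0) / pi0 * ((p - alpha p q) / (q - alpha p q)) * (q / p) powi (Nval e + 1))"

text \<open>Reparametrisation: gamma = p/q, kappa = 1/(1-p-q), inverted.\<close>
definition q_of :: "real \<Rightarrow> real \<Rightarrow> real" where
  "q_of \<gamma> \<kappa> = (1 - 1 / \<kappa>) / (\<gamma> + 1)"

definition p_of :: "real \<Rightarrow> real \<Rightarrow> real" where
  "p_of \<gamma> \<kappa> = \<gamma> * q_of \<gamma> \<kappa>"

definition Vgk :: "real \<Rightarrow> real \<Rightarrow> real \<Rightarrow> evidence \<Rightarrow> real" where
  "Vgk pi0 \<gamma> \<kappa> e = Vval pi0 (p_of \<gamma> \<kappa>) (q_of \<gamma> \<kappa>) e"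

end

theory Submission
  imports Defs "HOL-Real_Asymp.Real_Asymp"
begin

text \<open>
  Since \<open>V = 1 / (1 + (1 - pi0) / pi0 * X)\<close> with the odds factor
  \<open>X = (p - \<alpha>) / (q - \<alpha>) * (q / p) ^ (N + 1)\<close>, every claim is a monotonicity property of
  \<open>X\<close>, with the direction reversed.

  For fixed \<open>\<gamma>\<close> the ratio \<open>q / p = 1 / \<gamma>\<close> is fixed and
  \<open>(p - \<alpha>) / (q - \<alpha>) = (\<gamma> - t) / (1 - t)\<close> with \<open>t = \<alpha> / q = 2 p / (1 + sqrt (1 - 4 p q))\<close>,
  which grows with \<open>\<kappa>\<close>.

  For fixed \<open>\<kappa>\<close> the sum \<open>s = p + q\<close> is fixed. With \<open>a = 1 - s\<close>, \<open>b = 1 + s\<close> and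
  \<open>h = sqrt (1 - 4 p q) - (p - q)\<close> one has \<open>h (h + 2 (p - q)) = a b\<close>, so \<open>h\<close> falls as
  \<open>\<gamma>\<close> grows, and \<open>X = a * (h - a) ^ N / (h (h + a) ^ (N + 1)) * (h + b) ^ (N + 1) / (b - h) ^ N\<close>.
  The last factor increases with \<open>h\<close>, the middle one does so while \<open>h \<le> (N + 1/2) a\<close>,
  which holds once \<open>\<gamma> > (2 N + 3) / (2 N - 1)\<close>; for \<open>N = 0\<close> the two remaining factors
  \<open>a / h\<close> and \<open>(h + b) / (h + a)\<close> both decrease in \<open>h\<close>.

  For fixed \<open>q\<close>, \<open>\<alpha>\<close> increases with \<open>p = \<alpha> (1 - \<alpha>) / q\<close> and
  \<open>X = q ^ (2 N + 1) g \<alpha>\<close> with \<open>g x = (1 - x - q) / ((q - x) x ^ N (1 - x) ^ (N + 1))\<close>.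
  The elasticity \<open>x g' x / g x\<close> increases in \<open>x\<close> and decreases in \<open>N\<close>, so \<open>g\<close> first
  falls and then rises, and its turning point moves right as \<open>N\<close> grows.
\<close>

lemma Nval_nonneg: "0 \<le> Nval e"
proof -
  have "Dval (restr e 0) = 0"
    by (simp add: restr_def Dval_def Gcnt_def Bcnt_def)
  moreover have "Dval (restr e 0) \<in> (\<lambda>k. Dval (restr e k)) ` {0..length e}"
    by auto
  ultimately show ?thesis
    unfolding Nval_def by (metis Max_ge finite_atLeastAtMost finite_imageI)
qed

definition odds_factor :: "real \<Rightarrow> real \<Rightarrow> nat \<Rightarrow> real" where
  "odds_factor p q N = (p - alpha p q) / (q - alpha p q) * (q / p) ^ (N + 1)"

lemma Vval_eq_odds_factor:
  "Vval pi0 p q e = 1 / (1 + (1 - pi0) / pi0 * odds_factor p q (nat (Nval e)))"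
proof -
  have "Nval e + 1 = int (nat (Nval e) + 1)"
    using Nval_nonneg[of e] by simp
  then have "(q / p) powi (Nval e + 1) = (q / p) ^ (nat (Nval e) + 1)"
    by (metis power_int_of_nat)
  then show ?thesis
    unfolding Vval_def odds_factor_def by (simp add: mult.assoc)
qed

lemma alpha_commute: "alpha p q = alpha q p"
  by (simp add: alpha_def mult.commute mult.left_commute)

lemma four_mult_less_one:
  fixes p q :: real
  assumes "0 < p" "0 < q" "p + q < 1"
  shows "4 * p * q < 1"
proof -
  have "4 * p * q \<le> (p + q)\<^sup>2"
    using zero_le_power2[of "p - q"] by (simp add: power2_eq_square algebra_simps)
  moreover have "(p + q) * (p + q) < 1 * 1"
    using assms by (intro mult_strict_mono) auto
  ultimately show ?thesis
    by (simp add: power2_eq_square)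
qed

lemma sqrt_discriminant_bounds:
  fixes p q :: real
  assumes "0 < p" "0 < q" "p + q < 1"
  shows "1 - 2 * q < sqrt (1 - 4 * p * q)" and "sqrt (1 - 4 * p * q) < 1"
proof -
  have "q * q < q * (1 - p)"
    using assms by (intro mult_strict_left_mono) auto
  then have "(1 - 2 * q)\<^sup>2 < 1 - 4 * p * q"
    by (simp add: power2_eq_square algebra_simps)
  then show "1 - 2 * q < sqrt (1 - 4 * p * q)"
    by (rule real_less_rsqrt)
  show "sqrt (1 - 4 * p * q) < 1"
    using assms by simp
qed

lemma alpha_pos:
  assumes "0 < p" "0 < q" "p + q < 1"
  shows "0 < alpha p q"
  using sqrt_discriminant_bounds(2)[OF assms] by (simp add: alpha_def)

lemma alpha_less_right:
  assumes "0 < p" "0 < q" "p + q < 1"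
  shows "alpha p q < q"
  using sqrt_discriminant_bounds(1)[OF assms] by (simp add: alpha_def)

lemma alpha_less_left:
  assumes "0 < p" "0 < q" "p + q < 1"
  shows "alpha p q < p"
  using alpha_less_right[of q p] assms by (simp add: alpha_commute add.commute)

lemma alpha_root:
  assumes "4 * p * q \<le> 1"
  shows "alpha p q * (1 - alpha p q) = p * q"
proof -
  define u where "u = sqrt (1 - 4 * p * q)"
  have "u * u = 1 - 4 * p * q"
    unfolding u_def using assms by simp
  then show ?thesis
    unfolding alpha_def u_def[symmetric] by (simp add: field_simps)
qed

lemma alpha_rationalized:
  assumes "4 * p * q \<le> 1"
  shows "alpha p q = 2 * p * q / (1 + sqrt (1 - 4 * p * q))"
proof -
  define u where "u = sqrt (1 - 4 * p * q)"
  have "u * u = 1 - 4 * p * q" "0 \<le> u"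
    unfolding u_def using assms by simp_all
  then show ?thesis
    unfolding alpha_def u_def[symmetric] by (simp add: field_simps)
qed

lemma alpha_strict_mono_left:
  assumes "0 < q" "p1 < p2"
  shows "alpha p1 q < alpha p2 q"
  using assms by (simp add: alpha_def)

lemma odds_factor_pos:
  assumes "0 < p" "0 < q" "p + q < 1"
  shows "0 < odds_factor p q N"
  using alpha_less_left[OF assms] alpha_less_right[OF assms] assms
  by (simp add: odds_factor_def)

lemma Vval_strict_antimono_odds_factor:
  assumes "0 < pi0" "pi0 < 1" "0 < p" "0 < q" "p + q < 1"
    and "odds_factor p q (nat (Nval e)) < odds_factor p' q' (nat (Nval e))"
  shows "Vval pi0 p' q' e < Vval pi0 p q e"
proof -
  define C where "C = (1 - pi0) / pi0"
  have "0 < C"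
    using assms(1,2) by (simp add: C_def)
  then have "C * odds_factor p q (nat (Nval e)) < C * odds_factor p' q' (nat (Nval e))"
    and "0 < C * odds_factor p q (nat (Nval e))"
    using assms(6) odds_factor_pos[OF assms(3-5)] by simp_all
  then show ?thesis
    unfolding Vval_eq_odds_factor C_def[symmetric] by (simp add: frac_less2)
qed

lemma p_of_plus_q_of:
  assumes "0 < \<gamma>"
  shows "p_of \<gamma> \<kappa> + q_of \<gamma> \<kappa> = 1 - 1 / \<kappa>"
proof -
  have "p_of \<gamma> \<kappa> + q_of \<gamma> \<kappa> = (\<gamma> + 1) * q_of \<gamma> \<kappa>"
    by (simp add: p_of_def algebra_simps)
  also have "\<dots> = 1 - 1 / \<kappa>"
    using assms by (simp add: q_of_def)
  finally show ?thesis .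
qed

lemma p_of_q_of_bounds:
  assumes "0 < \<gamma>" "1 < \<kappa>"
  shows "0 < p_of \<gamma> \<kappa>" "0 < q_of \<gamma> \<kappa>" "p_of \<gamma> \<kappa> + q_of \<gamma> \<kappa> < 1"
proof -
  show "0 < q_of \<gamma> \<kappa>"
    using assms by (simp add: q_of_def)
  then show "0 < p_of \<gamma> \<kappa>"
    using assms(1) by (simp add: p_of_def)
  show "p_of \<gamma> \<kappa> + q_of \<gamma> \<kappa> < 1"
    using p_of_plus_q_of[OF assms(1)] assms(2) by simp
qed

lemma q_of_strict_mono_kappa:
  assumes "0 < \<gamma>" "0 < \<kappa>1" "\<kappa>1 < \<kappa>2"
  shows "q_of \<gamma> \<kappa>1 < q_of \<gamma> \<kappa>2"
proof -
  have "1 / \<kappa>2 < 1 / \<kappa>1"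
    using assms by (simp add: frac_less2)
  then show ?thesis
    using assms by (simp add: q_of_def divide_strict_right_mono)
qed

lemma p_of_minus_q_of_strict_mono_gamma:
  assumes "1 < \<kappa>" "0 < \<gamma>1" "\<gamma>1 < \<gamma>2"
  shows "p_of \<gamma>1 \<kappa> - q_of \<gamma>1 \<kappa> < p_of \<gamma>2 \<kappa> - q_of \<gamma>2 \<kappa>"
proof -
  have diff: "p_of \<gamma> \<kappa> - q_of \<gamma> \<kappa> = (1 - 1 / \<kappa>) * ((\<gamma> - 1) / (\<gamma> + 1))" for \<gamma>
  proof -
    have "p_of \<gamma> \<kappa> - q_of \<gamma> \<kappa> = (\<gamma> - 1) * q_of \<gamma> \<kappa>"
      by (simp add: p_of_def algebra_simps)
    then show ?thesis
      by (simp add: q_of_def mult.commute)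
  qed
  have "(\<gamma>1 - 1) / (\<gamma>1 + 1) < (\<gamma>2 - 1) / (\<gamma>2 + 1)"
    using assms by (simp add: field_simps)
  then show ?thesis
    unfolding diff using assms by (intro mult_strict_left_mono) auto
qed

section \<open>Dependence on \<kappa>\<close>

lemma alpha_scaled_div_strict_mono:
  assumes "0 < c" "0 < q1" "q1 < q2" "c * q2 + q2 < 1"
  shows "alpha (c * q1) q1 / q1 < alpha (c * q2) q2 / q2"
proof -
  have disc: "4 * (c * q) * q \<le> 1" if "0 < q" "q \<le> q2" for q
  proof -
    have "c * q \<le> c * q2"
      using that assms by (intro mult_left_mono) auto
    then have "c * q + q < 1"
      using that assms by linarith
    then show ?thesis
      using four_mult_less_one[of "c * q" q] that assms by simp
  qed
  have ratio: "alpha (c * q) q / q = 2 * c * q / (1 + sqrt (1 - 4 * (c * q) * q))"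
    if "0 < q" "q \<le> q2" for q
    using alpha_rationalized[OF disc[OF that]] that by simp
  have "4 * (c * q1) * q1 < 4 * (c * q2) * q2"
    using assms by (simp add: mult_strict_mono)
  then have den_le: "1 + sqrt (1 - 4 * (c * q2) * q2) \<le> 1 + sqrt (1 - 4 * (c * q1) * q1)"
    by simp
  have den_pos: "0 < 1 + sqrt (1 - 4 * (c * q2) * q2)"
    by (intro add_pos_nonneg) (use disc[of q2] assms in auto)
  have "2 * c * q1 / (1 + sqrt (1 - 4 * (c * q1) * q1))
      < 2 * c * q2 / (1 + sqrt (1 - 4 * (c * q2) * q2))"
    by (rule frac_less[OF _ _ den_pos den_le]) (use assms in auto)
  then show ?thesis
    using ratio assms by simp
qed

lemma odds_factor_scaled_strict_mono:
  assumes "1 < c" "0 < q1" "q1 < q2" "c * q2 + q2 < 1"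
  shows "odds_factor (c * q1) q1 N < odds_factor (c * q2) q2 N"
proof -
  define t where "t q = alpha (c * q) q / q" for q
  have "c * q1 \<le> c * q2"
    using assms by (intro mult_left_mono) auto
  then have sum1: "c * q1 + q1 < 1"
    using assms by linarith
  have t_bounds: "0 < t q" "t q < 1" if "0 < q" "c * q + q < 1" for q
    using alpha_pos[of "c * q" q] alpha_less_right[of "c * q" q] that assms
    by (auto simp: t_def)
  have odds: "odds_factor (c * q) q N = (c - t q) / (1 - t q) * (1 / c) ^ (N + 1)"
    if "0 < q" for q
  proof -
    have "c - t q = (c * q - alpha (c * q) q) / q" "1 - t q = (q - alpha (c * q) q) / q"
      using that by (simp_all add: t_def field_simps)
    then show ?thesis
      using that by (simp add: odds_factor_def)
  qed
  have "t q1 < t q2"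
    unfolding t_def using assms by (intro alpha_scaled_div_strict_mono) auto
  then have "(c - 1) * t q1 < (c - 1) * t q2"
    using assms by simp
  then have "(c - t q1) / (1 - t q1) < (c - t q2) / (1 - t q2)"
    using t_bounds[OF assms(2) sum1] t_bounds[of q2] assms by (simp add: field_simps)
  then have "(c - t q1) / (1 - t q1) * (1 / c) ^ (N + 1)
      < (c - t q2) / (1 - t q2) * (1 / c) ^ (N + 1)"
    using assms by (intro mult_strict_right_mono) auto
  then show ?thesis
    using odds[of q1] odds[of q2] assms by simp
qed

lemma Vgk_strict_antimono_kappa:
  assumes "0 < pi0" "pi0 < 1" "1 < \<gamma>" "1 < \<kappa>1" "\<kappa>1 < \<kappa>2"
  shows "Vgk pi0 \<gamma> \<kappa>2 e < Vgk pi0 \<gamma> \<kappa>1 e"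
proof -
  have "0 < \<gamma>" "1 < \<kappa>2"
    using assms by simp_all
  note bounds1 = p_of_q_of_bounds[OF \<open>0 < \<gamma>\<close> assms(4)]
    and bounds2 = p_of_q_of_bounds[OF \<open>0 < \<gamma>\<close> \<open>1 < \<kappa>2\<close>]
  have "odds_factor (\<gamma> * q_of \<gamma> \<kappa>1) (q_of \<gamma> \<kappa>1) N < odds_factor (\<gamma> * q_of \<gamma> \<kappa>2) (q_of \<gamma> \<kappa>2) N" for N
    using bounds1 bounds2 q_of_strict_mono_kappa[of \<gamma> \<kappa>1 \<kappa>2] assms
    by (intro odds_factor_scaled_strict_mono) (auto simp: p_of_def)
  then show ?thesis
    unfolding Vgk_def using assms(1,2) bounds1
    by (intro Vval_strict_antimono_odds_factor) (auto simp: p_of_def)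
qed

section \<open>Dependence on \<gamma>\<close>

text \<open>For fixed \<open>p + q\<close>, \<open>h_of\<close> is a decreasing reparametrisation of the spread
  \<open>p - q\<close> in which the odds factor becomes a product of powers (\<open>odds_factor_h_of\<close>).\<close>

definition h_of :: "real \<Rightarrow> real \<Rightarrow> real" where
  "h_of p q = sqrt (1 - 4 * p * q) - (p - q)"

lemma h_of_mult_identity:
  assumes "4 * p * q \<le> 1"
  shows "h_of p q * (h_of p q + 2 * (p - q)) = (1 - (p + q)) * (1 + (p + q))"
proof -
  define u where "u = sqrt (1 - 4 * p * q)"
  have "u * u = 1 - 4 * p * q"
    using assms by (simp add: u_def)
  moreover have "h_of p q * (h_of p q + 2 * (p - q)) = u * u - (p - q) * (p - q)"
    by (simp add: h_of_def u_def algebra_simps)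
  ultimately show ?thesis
    by (simp add: algebra_simps)
qed

lemma h_of_bounds:
  assumes "0 < p" "0 < q" "p + q < 1"
  shows "1 - (p + q) < h_of p q" and "h_of p q < 1 + (p + q)"
  unfolding h_of_def using sqrt_discriminant_bounds[OF assms] assms by linarith+

lemma h_of_parametrization:
  assumes "4 * p * q \<le> 1"
  defines "a \<equiv> 1 - (p + q)" and "b \<equiv> 1 + (p + q)" and "h \<equiv> h_of p q"
  shows "4 * h * p = (b - h) * (h + a)" and "4 * h * q = (h - a) * (h + b)"
    and "2 * h * (p - alpha p q) = a * (b - h)" and "2 * (q - alpha p q) = h - a"
proof -
  have key: "h * (h + 2 * (p - q)) = a * b"
    unfolding a_def b_def h_def by (rule h_of_mult_identity[OF assms(1)])
  have alpha: "2 * alpha p q = 1 - h - (p - q)"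
    by (simp add: alpha_def h_def h_of_def)
  have "(b - h) * (h + a) - 4 * h * p = a * b - h * (h + 2 * (p - q))"
    by (simp add: a_def b_def algebra_simps)
  then show "4 * h * p = (b - h) * (h + a)"
    using key by simp
  have "(h - a) * (h + b) - 4 * h * q = h * (h + 2 * (p - q)) - a * b"
    by (simp add: a_def b_def algebra_simps)
  then show "4 * h * q = (h - a) * (h + b)"
    using key by simp
  have "2 * h * (p - alpha p q) = h * (2 * p - 2 * alpha p q)"
    by (simp add: algebra_simps)
  also have "\<dots> = h * (h + 2 * (p - q)) - a * h"
    unfolding alpha by (simp add: a_def algebra_simps)
  finally show "2 * h * (p - alpha p q) = a * (b - h)"
    using key by (simp add: algebra_simps)
  show "2 * (q - alpha p q) = h - a"
    using alpha by (simp add: a_def algebra_simps)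
qed

lemma odds_factor_h_of:
  assumes "0 < p" "0 < q" "p + q < 1"
  defines "a \<equiv> 1 - (p + q)" and "b \<equiv> 1 + (p + q)" and "h \<equiv> h_of p q"
  shows "odds_factor p q N = a * ((h - a) ^ N / (h * (h + a) ^ (N + 1))) * ((h + b) ^ (N + 1) / (b - h) ^ N)"
proof -
  have disc: "4 * p * q \<le> 1"
    using four_mult_less_one[OF assms(1-3)] by simp
  note param = h_of_parametrization[OF disc, folded a_def b_def h_def]
  have pos: "0 < a" "0 < h" "0 < h - a" "0 < b - h" "0 < h + a" "0 < h + b"
    using h_of_bounds[OF assms(1-3)] assms(3) by (auto simp: a_def b_def h_def)
  have "p - alpha p q = 2 * h * (p - alpha p q) / (2 * h)" "q - alpha p q = 2 * (q - alpha p q) / 2"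
    using pos by simp_all
  then have pa: "p - alpha p q = a * (b - h) / (2 * h)" and qa: "q - alpha p q = (h - a) / 2"
    unfolding param(3,4) .
  have ratio: "(p - alpha p q) / (q - alpha p q) = a * (b - h) / (h * (h - a))"
    unfolding pa qa using pos by (simp add: field_simps)
  have "p = 4 * h * p / (4 * h)" "q = 4 * h * q / (4 * h)"
    using pos by simp_all
  then have p: "p = (b - h) * (h + a) / (4 * h)" and q: "q = (h - a) * (h + b) / (4 * h)"
    unfolding param(1,2) .
  have qp: "q / p = (h - a) * (h + b) / ((b - h) * (h + a))"
    by (subst p, subst q) (use pos in simp)
  have regroup: "a * C / (h * A) * (A * B / (C * D)) ^ (N + 1)
      = a * (A ^ N / (h * D ^ (N + 1))) * (B ^ (N + 1) / C ^ N)"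
    if "0 < A" "0 < C" "0 < D" for A B C D :: real
  proof -
    have "(A * B / (C * D)) ^ (N + 1) = (A * A ^ N) * B ^ (N + 1) / ((C * C ^ N) * D ^ (N + 1))"
      by (simp add: power_divide power_mult_distrib del: power_Suc) (simp only: power_Suc)
    moreover have "0 < a" "0 < h"
      using pos by simp_all
    ultimately show ?thesis
      using that by (simp del: power_Suc add: field_simps)
  qed
  show ?thesis
    unfolding odds_factor_def ratio qp using pos by (intro regroup) auto
qed

lemma h_of_strict_antimono_diff:
  assumes "0 < p1" "0 < q1" "0 < p2" "0 < q2" "p1 + q1 = p2 + q2" "p2 + q2 < 1"
    and "p1 - q1 < p2 - q2"
  shows "h_of p2 q2 < h_of p1 q1"
proof (rule ccontr)
  assume "\<not> ?thesis"
  then have le: "h_of p1 q1 \<le> h_of p2 q2"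
    by simp
  have sum1: "p1 + q1 < 1"
    using assms by simp
  note id1 = h_of_mult_identity[of p1 q1] and id2 = h_of_mult_identity[of p2 q2]
  have disc: "4 * p1 * q1 \<le> 1" "4 * p2 * q2 \<le> 1"
    using four_mult_less_one[OF assms(1,2) sum1] four_mult_less_one[OF assms(3,4,6)] by simp_all
  have h1: "0 < h_of p1 q1"
    using h_of_bounds(1)[OF assms(1,2) sum1] sum1 by simp
  have "0 < (1 - (p1 + q1)) * (1 + (p1 + q1))"
    using sum1 assms by simp
  then have "0 < h_of p1 q1 + 2 * (p1 - q1)"
    using id1[OF disc(1)] h1 by (metis zero_less_mult_pos)
  then have "h_of p1 q1 * (h_of p1 q1 + 2 * (p1 - q1)) < h_of p2 q2 * (h_of p2 q2 + 2 * (p2 - q2))"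
    using le h1 assms(7) by (intro mult_le_less_imp_less) auto
  then show False
    using id1[OF disc(1)] id2[OF disc(2)] assms(5) by simp
qed

lemma odds_factor_zero_strict_mono_diff:
  assumes "0 < p1" "0 < q1" "0 < p2" "0 < q2" "p1 + q1 = p2 + q2" "p2 + q2 < 1"
    and "p1 - q1 < p2 - q2"
  shows "odds_factor p1 q1 0 < odds_factor p2 q2 0"
proof -
  define a where "a = 1 - (p1 + q1)"
  define b where "b = 1 + (p1 + q1)"
  define h1 where "h1 = h_of p1 q1"
  define h2 where "h2 = h_of p2 q2"
  have sum1: "p1 + q1 < 1"
    using assms by simp
  have odds: "odds_factor p1 q1 0 = a / h1 * ((h1 + b) / (h1 + a))"
    "odds_factor p2 q2 0 = a / h2 * ((h2 + b) / (h2 + a))"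
    using odds_factor_h_of[OF assms(1,2) sum1, of 0] odds_factor_h_of[OF assms(3,4,6), of 0] assms(5)
    by (simp_all add: a_def b_def h1_def h2_def)
  have bounds: "a < h1" "h1 < b" "a < h2" "h2 < b"
    using h_of_bounds[OF assms(1,2) sum1] h_of_bounds[OF assms(3,4,6)] assms(5)
    by (simp_all add: a_def b_def h1_def h2_def)
  have a: "0 < a"
    using sum1 by (simp add: a_def)
  have h21: "h2 < h1"
    unfolding h1_def h2_def using assms by (rule h_of_strict_antimono_diff)
  have "a / h1 < a / h2"
    using a bounds h21 by (intro divide_strict_left_mono) auto
  moreover have "(h1 + b) / (h1 + a) \<le> (h2 + b) / (h2 + a)"
  proof -
    have "(h1 + b) * (h2 + a) - (h2 + b) * (h1 + a) = (a - b) * (h1 - h2)"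
      by (simp add: algebra_simps)
    also have "\<dots> \<le> 0"
      using bounds h21 by (intro mult_nonpos_nonneg) auto
    finally show ?thesis
      using a bounds by (simp add: divide_simps)
  qed
  ultimately show ?thesis
    unfolding odds using a bounds by (intro mult_less_le_imp_less) auto
qed

lemma power_quotient_strict_mono:
  fixes a h1 h2 :: real and N :: nat
  assumes "0 < a" "a < h1" "h1 < h2" "h2 \<le> (real N + 1 / 2) * a"
  shows "(h1 - a) ^ N / (h1 * (h1 + a) ^ (N + 1)) < (h2 - a) ^ N / (h2 * (h2 + a) ^ (N + 1))"
proof -
  define L where "L h = real N * ln (h - a) - (ln h + real (N + 1) * ln (h + a))" for h
  have ln_eq: "ln ((h - a) ^ N / (h * (h + a) ^ (N + 1))) = L h" if "a < h" for h
    using that assms(1) by (simp add: L_def ln_div ln_mult ln_realpow) (simp add: algebra_simps)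
  have "L h1 < L h2"
  proof (rule DERIV_pos_imp_increasing[OF assms(3)])
    fix x assume x: "h1 \<le> x" "x \<le> h2"
    then have xa: "a < x" "0 < x"
      using assms by auto
    have deriv: "DERIV L x :> real N / (x - a) - (1 / x + real (N + 1) / (x + a))"
      unfolding L_def using xa assms(1) by (auto intro!: derivative_eq_intros)
    have "2 * x * x \<le> (2 * real N + 1) * a * x"
      using x xa assms(4) by (intro mult_right_mono) (auto simp: algebra_simps)
    moreover have "0 < a * a"
      using assms(1) by simp
    ultimately have num: "0 < -2 * x * x + (2 * real N + 1) * a * x + a * a"
      by linarith
    have "real N / (x - a) - (1 / x + real (N + 1) / (x + a))
        = (-2 * x * x + (2 * real N + 1) * a * x + a * a) / (x * (x - a) * (x + a))"
      using xa assms(1) by (simp add: divide_simps) (simp add: algebra_simps)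
    also have "\<dots> > 0"
      using num xa assms(1) by simp
    finally show "\<exists>y. DERIV L x :> y \<and> 0 < y"
      using deriv by blast
  qed
  then have "ln ((h1 - a) ^ N / (h1 * (h1 + a) ^ (N + 1))) < ln ((h2 - a) ^ N / (h2 * (h2 + a) ^ (N + 1)))"
    using ln_eq[of h1] ln_eq[of h2] assms(2,3) by simp
  moreover have "0 < (h - a) ^ N / (h * (h + a) ^ (N + 1))" if "a < h" for h
    using that assms(1) by simp
  ultimately show ?thesis
    using assms(2,3) by (simp del: power_Suc)
qed

lemma h_of_less_if_ratio_bound:
  fixes N :: nat
  assumes "0 < p" "0 < q" "p + q < 1" "(2 * real N + 3) * q < (2 * real N - 1) * p"
  shows "h_of p q < (real N + 1 / 2) * (1 - (p + q))"
proof -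
  define a where "a = 1 - (p + q)"
  define b where "b = 1 + (p + q)"
  define h where "h = h_of p q"
  have disc: "4 * p * q \<le> 1"
    using four_mult_less_one[OF assms(1-3)] by simp
  note param = h_of_parametrization[OF disc, folded a_def b_def h_def]
  have bounds: "0 < a" "a < h" "h < b"
    using h_of_bounds[OF assms(1-3)] assms(3) by (auto simp: a_def b_def h_def)
  have "(4 * h) * ((2 * real N + 3) * q) < (4 * h) * ((2 * real N - 1) * p)"
    using assms(4) bounds by (intro mult_strict_left_mono) auto
  then have "(2 * real N + 3) * (4 * h * q) < (2 * real N - 1) * (4 * h * p)"
    by (simp add: algebra_simps)
  then have "(2 * real N + 3) * ((h - a) * (h + b)) < (2 * real N - 1) * ((b - h) * (h + a))"
    unfolding param(1,2) .
  moreover have "(2 * real N + 3) * ((h - a) * (b - h)) \<le> (2 * real N + 3) * ((h - a) * (h + b))"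
    using bounds by (intro mult_left_mono) auto
  ultimately have "((2 * real N + 3) * (h - a)) * (b - h) < ((2 * real N - 1) * (h + a)) * (b - h)"
    by (simp add: algebra_simps)
  then have "(2 * real N + 3) * (h - a) < (2 * real N - 1) * (h + a)"
    using bounds by (simp add: mult_less_cancel_right_pos)
  then show ?thesis
    unfolding a_def[symmetric] h_def[symmetric] by (simp add: algebra_simps)
qed

lemma odds_factor_strict_antimono_diff:
  fixes N :: nat
  assumes "0 < p1" "0 < q1" "0 < p2" "0 < q2" "p1 + q1 = p2 + q2" "p2 + q2 < 1"
    and "p1 - q1 < p2 - q2" "(2 * real N + 3) * q1 < (2 * real N - 1) * p1"
  shows "odds_factor p2 q2 N < odds_factor p1 q1 N"
proof -
  define a where "a = 1 - (p1 + q1)"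
  define b where "b = 1 + (p1 + q1)"
  define h1 where "h1 = h_of p1 q1"
  define h2 where "h2 = h_of p2 q2"
  have sum1: "p1 + q1 < 1"
    using assms by simp
  have odds: "odds_factor p1 q1 N = a * ((h1 - a) ^ N / (h1 * (h1 + a) ^ (N + 1))) * ((h1 + b) ^ (N + 1) / (b - h1) ^ N)"
    "odds_factor p2 q2 N = a * ((h2 - a) ^ N / (h2 * (h2 + a) ^ (N + 1))) * ((h2 + b) ^ (N + 1) / (b - h2) ^ N)"
    using odds_factor_h_of[OF assms(1,2) sum1] odds_factor_h_of[OF assms(3,4,6)] assms(5)
    by (simp_all add: a_def b_def h1_def h2_def)
  have bounds: "0 < a" "a < h1" "h1 < b" "a < h2" "h2 < b"
    using h_of_bounds[OF assms(1,2) sum1] h_of_bounds[OF assms(3,4,6)] assms(5) sum1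
    by (simp_all add: a_def b_def h1_def h2_def)
  have h21: "h2 < h1"
    unfolding h1_def h2_def using assms(1-7) by (rule h_of_strict_antimono_diff)
  have "h1 < (real N + 1 / 2) * a"
    using h_of_less_if_ratio_bound[OF assms(1,2) sum1 assms(8)] by (simp add: h1_def a_def)
  then have "(h2 - a) ^ N / (h2 * (h2 + a) ^ (N + 1)) < (h1 - a) ^ N / (h1 * (h1 + a) ^ (N + 1))"
    using bounds h21 by (intro power_quotient_strict_mono) auto
  moreover have "(h2 + b) ^ (N + 1) / (b - h2) ^ N \<le> (h1 + b) ^ (N + 1) / (b - h1) ^ N"
    using bounds h21 by (intro frac_le power_mono) auto
  ultimately show ?thesis
    unfolding odds using bounds h21 by (intro mult_less_le_imp_less mult_strict_left_mono) auto
qed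

text \<open>Above this threshold \<open>h_of\<close> stays below \<open>(N + 1/2) (1 - p - q)\<close>.\<close>

definition gamma_threshold :: "int \<Rightarrow> real" where
  "gamma_threshold n = (2 * real_of_int n + 3) / (2 * real_of_int n - 1)"

lemma gamma_threshold_gt_one: "0 < n \<Longrightarrow> 1 < gamma_threshold n"
  by (simp add: gamma_threshold_def field_simps)

lemma gamma_threshold_tendsto_one: "(gamma_threshold \<longlongrightarrow> 1) at_top"
proof -
  have "((\<lambda>x::real. (2 * x + 3) / (2 * x - 1)) \<longlongrightarrow> 1) at_top"
    by real_asymp
  then show ?thesis
    unfolding gamma_threshold_def by (rule filterlim_compose) (rule filterlim_real_of_int_at_top)
qed

lemma Vgk_strict_antimono_gamma_if_Nval_zero:
  assumes "0 < pi0" "pi0 < 1" "Nval e = 0" "1 < \<kappa>" "1 < \<gamma>1" "\<gamma>1 < \<gamma>2"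
  shows "Vgk pi0 \<gamma>2 \<kappa> e < Vgk pi0 \<gamma>1 \<kappa> e"
proof -
  have "0 < \<gamma>1" "0 < \<gamma>2"
    using assms by simp_all
  note bounds1 = p_of_q_of_bounds[OF \<open>0 < \<gamma>1\<close> assms(4)]
    and bounds2 = p_of_q_of_bounds[OF \<open>0 < \<gamma>2\<close> assms(4)]
  have "odds_factor (p_of \<gamma>1 \<kappa>) (q_of \<gamma>1 \<kappa>) 0 < odds_factor (p_of \<gamma>2 \<kappa>) (q_of \<gamma>2 \<kappa>) 0"
    using bounds1 bounds2 p_of_plus_q_of[OF \<open>0 < \<gamma>1\<close>, of \<kappa>] p_of_plus_q_of[OF \<open>0 < \<gamma>2\<close>, of \<kappa>]
      p_of_minus_q_of_strict_mono_gamma[OF assms(4) \<open>0 < \<gamma>1\<close> assms(6)]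
    by (intro odds_factor_zero_strict_mono_diff) auto
  then show ?thesis
    unfolding Vgk_def using assms(1-3) bounds1 by (intro Vval_strict_antimono_odds_factor) auto
qed

lemma Vgk_strict_mono_gamma_above_threshold:
  assumes "0 < pi0" "pi0 < 1" "0 < Nval e" "1 < \<kappa>" "gamma_threshold (Nval e) < \<gamma>1" "\<gamma>1 < \<gamma>2"
  shows "Vgk pi0 \<gamma>1 \<kappa> e < Vgk pi0 \<gamma>2 \<kappa> e"
proof -
  define N where "N = nat (Nval e)"
  have N: "real_of_int (Nval e) = real N" "1 \<le> N"
    using assms(3) by (simp_all add: N_def)
  have "1 < \<gamma>1"
    using gamma_threshold_gt_one[OF assms(3)] assms(5) by simp
  then have "0 < \<gamma>1" "0 < \<gamma>2"
    using assms(6) by simp_all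
  note bounds1 = p_of_q_of_bounds[OF \<open>0 < \<gamma>1\<close> assms(4)]
    and bounds2 = p_of_q_of_bounds[OF \<open>0 < \<gamma>2\<close> assms(4)]
  have "(2 * real N + 3) / (2 * real N - 1) < \<gamma>1"
    using assms(5) N by (simp add: gamma_threshold_def)
  then have "(2 * real N + 3) < \<gamma>1 * (2 * real N - 1)"
    using N by (simp add: divide_less_eq)
  then have "(2 * real N + 3) * q_of \<gamma>1 \<kappa> < (\<gamma>1 * (2 * real N - 1)) * q_of \<gamma>1 \<kappa>"
    using bounds1(2) by (rule mult_strict_right_mono)
  then have "(2 * real N + 3) * q_of \<gamma>1 \<kappa> < (2 * real N - 1) * p_of \<gamma>1 \<kappa>"
    by (simp add: p_of_def algebra_simps)
  then have "odds_factor (p_of \<gamma>2 \<kappa>) (q_of \<gamma>2 \<kappa>) N < odds_factor (p_of \<gamma>1 \<kappa>) (q_of \<gamma>1 \<kappa>) N"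
    using bounds1 bounds2 p_of_plus_q_of[OF \<open>0 < \<gamma>1\<close>, of \<kappa>] p_of_plus_q_of[OF \<open>0 < \<gamma>2\<close>, of \<kappa>]
      p_of_minus_q_of_strict_mono_gamma[OF assms(4) \<open>0 < \<gamma>1\<close> assms(6)]
    by (intro odds_factor_strict_antimono_diff) auto
  then show ?thesis
    unfolding Vgk_def N_def using assms(1,2) bounds2 by (intro Vval_strict_antimono_odds_factor) auto
qed

section \<open>Dependence on p for fixed q\<close>

text \<open>Up to the factor \<open>q ^ (2 N + 1)\<close>, the odds factor for fixed \<open>q\<close> as a function of
  \<open>x = alpha p q\<close>, obtained by substituting \<open>p = x (1 - x) / q\<close>.\<close>

definition odds_in_alpha :: "real \<Rightarrow> nat \<Rightarrow> real \<Rightarrow> real" where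
  "odds_in_alpha q N x = (1 - x - q) / ((q - x) * x ^ N * (1 - x) ^ (N + 1))"

definition odds_elasticity :: "real \<Rightarrow> nat \<Rightarrow> real \<Rightarrow> real" where
  "odds_elasticity q N x =
     x * (1 - 2 * q) / ((q - x) * (1 - q - x)) + (real N + 1) * (x / (1 - x)) - real N"

lemma odds_factor_eq_odds_in_alpha:
  assumes "0 < p" "0 < q" "p + q < 1"
  shows "odds_factor p q N = q ^ (2 * N + 1) * odds_in_alpha q N (alpha p q)"
proof -
  define x where "x = alpha p q"
  have x: "0 < x" "x < q" "x < p"
    unfolding x_def using alpha_pos[OF assms] alpha_less_right[OF assms] alpha_less_left[OF assms] by auto
  have "x * (1 - x) = p * q"
    unfolding x_def using four_mult_less_one[OF assms] by (simp add: alpha_root)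
  then have p: "p = x * (1 - x) / q"
    using assms(2) by (simp add: field_simps)
  have regroup: "(A * B / q - A) / (q - A) * (q / (A * B / q)) ^ (N + 1)
      = q ^ (2 * N + 1) * ((B - q) / ((q - A) * A ^ N * B ^ (N + 1)))"
    if "0 < A" "A < q" "q < B" for A B :: real
  proof -
    have e1: "A * B / q - A = A * (B - q) / q" and e2: "q / (A * B / q) = (q * q) / (A * B)"
      using that assms(2) by (simp_all add: field_simps)
    have e3: "((q * q) / (A * B)) ^ (N + 1) = (q ^ N * q ^ N * (q * q)) / ((A * A ^ N) * B ^ (N + 1))"
      by (simp add: power_divide power_mult_distrib power_add del: power_Suc)
        (simp add: power_Suc algebra_simps)
    have e4: "q ^ (2 * N + 1) = q ^ N * q ^ N * q"
      unfolding mult_2 power_add by simp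
    show ?thesis
      unfolding e1 e2 e3 e4 using that assms(2) by (simp add: field_simps del: power_Suc)
  qed
  have "odds_factor p q N = q ^ (2 * N + 1) * ((1 - x - q) / ((q - x) * x ^ N * (1 - x) ^ (N + 1)))"
    unfolding odds_factor_def x_def[symmetric] using x assms by (subst (1 2) p) (intro regroup, auto)
  then show ?thesis
    by (simp add: odds_in_alpha_def x_def)
qed

lemma odds_in_alpha_pos:
  "q < 1 / 2 \<Longrightarrow> 0 < x \<Longrightarrow> x < q \<Longrightarrow> 0 < odds_in_alpha q N x"
  unfolding odds_in_alpha_def by (intro divide_pos_pos mult_pos_pos) auto

lemma ln_odds_in_alpha_has_derivative:
  assumes "q < 1 / 2" "0 < x" "x < q"
  shows "((\<lambda>x. ln (odds_in_alpha q N x)) has_real_derivative odds_elasticity q N x / x) (at x)"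
proof -
  define L where "L x = ln (1 - x - q) - (ln (q - x) + real N * ln x + real (N + 1) * ln (1 - x))" for x
  have "(L has_real_derivative
      (-1) / (1 - x - q) - ((-1) / (q - x) + real N * (1 / x) + real (N + 1) * ((-1) / (1 - x)))) (at x)"
    unfolding L_def using assms by (auto intro!: derivative_eq_intros)
  also have "(-1) / (1 - x - q) - ((-1) / (q - x) + real N * (1 / x) + real (N + 1) * ((-1) / (1 - x)))
      = odds_elasticity q N x / x"
  proof -
    have nz: "1 - x - q \<noteq> 0" "q - x \<noteq> 0" "x \<noteq> 0" "1 - x \<noteq> 0" "1 - q - x \<noteq> 0"
      using assms by auto
    have "1 / (q - x) - 1 / (1 - x - q) = (1 - 2 * q) / ((q - x) * (1 - q - x))"
      using nz by (simp add: divide_simps)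
    moreover have "odds_elasticity q N x / x
        = (1 - 2 * q) / ((q - x) * (1 - q - x)) + (real N + 1) / (1 - x) - real N / x"
      unfolding odds_elasticity_def using nz by (simp add: diff_divide_distrib add_divide_distrib)
    ultimately show ?thesis
      by (simp add: algebra_simps)
  qed
  finally have deriv: "(L has_real_derivative odds_elasticity q N x / x) (at x)" .
  have L_eq: "L y = ln (odds_in_alpha q N y)" if "y \<in> {0<..<q}" for y
  proof -
    have "0 < 1 - y - q" "0 < q - y" "0 < y" "0 < 1 - y"
      using that assms by auto
    then show ?thesis
      unfolding L_def odds_in_alpha_def by (simp add: ln_div ln_mult ln_realpow del: power_Suc)
  qed
  show ?thesis
    using has_field_derivative_transform_within_open[OF deriv, of "{0<..<q}"] L_eq assms by simp
qed

lemma odds_in_alpha_strict_antimono: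
  assumes "q < 1 / 2" "0 < x1" "x1 < x2" "x2 < q"
    and "\<And>x. x1 \<le> x \<Longrightarrow> x \<le> x2 \<Longrightarrow> odds_elasticity q N x < 0"
  shows "odds_in_alpha q N x2 < odds_in_alpha q N x1"
proof -
  have "ln (odds_in_alpha q N x2) < ln (odds_in_alpha q N x1)"
  proof (rule DERIV_neg_imp_decreasing[OF assms(3)])
    fix x assume "x1 \<le> x" "x \<le> x2"
    then show "\<exists>y. ((\<lambda>x. ln (odds_in_alpha q N x)) has_real_derivative y) (at x) \<and> y < 0"
      using assms ln_odds_in_alpha_has_derivative[of q x N]
      by (intro exI[of _ "odds_elasticity q N x / x"]) (auto simp: divide_neg_pos)
  qed
  then show ?thesis
    using assms odds_in_alpha_pos[of q x1 N] odds_in_alpha_pos[of q x2 N] by simp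
qed

lemma odds_in_alpha_strict_mono:
  assumes "q < 1 / 2" "0 < x1" "x1 < x2" "x2 < q"
    and "\<And>x. x1 \<le> x \<Longrightarrow> x \<le> x2 \<Longrightarrow> 0 < odds_elasticity q N x"
  shows "odds_in_alpha q N x1 < odds_in_alpha q N x2"
proof -
  have "ln (odds_in_alpha q N x1) < ln (odds_in_alpha q N x2)"
  proof (rule DERIV_pos_imp_increasing[OF assms(3)])
    fix x assume "x1 \<le> x" "x \<le> x2"
    then show "\<exists>y. ((\<lambda>x. ln (odds_in_alpha q N x)) has_real_derivative y) (at x) \<and> 0 < y"
      using assms ln_odds_in_alpha_has_derivative[of q x N]
      by (intro exI[of _ "odds_elasticity q N x / x"]) auto
  qed
  then show ?thesis
    using assms odds_in_alpha_pos[of q x1 N] odds_in_alpha_pos[of q x2 N] by simp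
qed

lemma odds_elasticity_strict_mono:
  assumes "q < 1 / 2" "0 < x1" "x1 < x2" "x2 < q"
  shows "odds_elasticity q N x1 < odds_elasticity q N x2"
proof -
  have "x1 * (1 - 2 * q) / ((q - x1) * (1 - q - x1)) < x2 * (1 - 2 * q) / ((q - x2) * (1 - q - x2))"
    using assms by (intro frac_less mult_mono) auto
  moreover have "(real N + 1) * (x1 / (1 - x1)) \<le> (real N + 1) * (x2 / (1 - x2))"
    using assms by (intro mult_left_mono frac_le) auto
  ultimately show ?thesis
    unfolding odds_elasticity_def by linarith
qed

lemma odds_elasticity_antimono_degree:
  assumes "0 < x" "x < 1 / 2" "n \<le> n'"
  shows "odds_elasticity q n' x \<le> odds_elasticity q n x"
proof -
  define y where "y = x / (1 - x)"
  have "odds_elasticity q n' x - odds_elasticity q n x = (real n' - real n) * (y - 1)"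
    unfolding odds_elasticity_def y_def[symmetric] by (simp add: algebra_simps)
  moreover have "(real n' - real n) * (y - 1) \<le> 0"
    using assms by (intro mult_nonneg_nonpos) (auto simp: y_def)
  ultimately show ?thesis
    by linarith
qed

lemma odds_elasticity_pos_near_right_end:
  assumes "0 < x0" "x0 < q" "q < 1 / 2"
  shows "\<exists>x'. x0 \<le> x' \<and> x' < q \<and> (\<forall>x. x' \<le> x \<longrightarrow> x < q \<longrightarrow> 0 < odds_elasticity q n x)"
proof -
  define m where "m = min ((q - x0) / 2) (x0 * (1 - 2 * q) / (real n + 1))"
  have m: "m \<le> (q - x0) / 2" "m \<le> x0 * (1 - 2 * q) / (real n + 1)"
    unfolding m_def by (rule min.cobounded1, rule min.cobounded2)
  have "0 < m"
    using assms by (simp add: m_def)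
  have "0 < odds_elasticity q n x" if x: "q - m \<le> x" "x < q" for x
  proof -
    have x0: "x0 \<le> x"
      using x(1) m(1) assms(2) by (simp add: field_simps)
    have "q - x \<le> x0 * (1 - 2 * q) / (real n + 1)"
      using x m by linarith
    also have "\<dots> \<le> x * (1 - 2 * q) / (real n + 1)"
      using x0 assms by (intro divide_right_mono mult_right_mono) auto
    finally have "(q - x) * (real n + 1) \<le> x * (1 - 2 * q)"
      by (simp add: field_simps)
    moreover have "(q - x) * (1 - q - x) * (real n + 1) < (q - x) * (real n + 1)"
      using x x0 assms by (intro mult_strict_right_mono) (auto simp: mult_less_cancel_left1)
    ultimately have "(q - x) * (1 - q - x) * (real n + 1) < x * (1 - 2 * q)"
      by linarith
    moreover have D: "0 < (q - x) * (1 - q - x)"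
      using x x0 assms by simp
    ultimately have "real n + 1 < x * (1 - 2 * q) / ((q - x) * (1 - q - x))"
      by (subst pos_less_divide_eq[OF D]) (simp add: mult.commute)
    moreover have "0 \<le> (real n + 1) * (x / (1 - x))"
      using x x0 assms by simp
    ultimately show ?thesis
      unfolding odds_elasticity_def by linarith
  qed
  then show ?thesis
    using m \<open>0 < m\<close> by (intro exI[of _ "q - m"]) auto
qed

text \<open>The elasticity is strictly increasing in \<open>x\<close>, so \<open>alpha_peak\<close> is the point where it
  changes sign, clipped below at \<open>alpha q q\<close>, that is, at \<open>p = q\<close>.\<close>

definition peak_candidates :: "real \<Rightarrow> nat \<Rightarrow> real set" where
  "peak_candidates q n = insert (alpha q q) {x. alpha q q < x \<and> x < q \<and> odds_elasticity q n x \<le> 0}"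

definition alpha_peak :: "real \<Rightarrow> nat \<Rightarrow> real" where
  "alpha_peak q n = Sup (peak_candidates q n)"

lemma bdd_above_peak_candidates: "bdd_above (peak_candidates q n)"
  unfolding peak_candidates_def by (rule bdd_aboveI[of _ "max (alpha q q) q"]) auto

lemma alpha_le_alpha_peak: "alpha q q \<le> alpha_peak q n"
  unfolding alpha_peak_def using bdd_above_peak_candidates
  by (rule cSup_upper[rotated]) (simp add: peak_candidates_def)

lemma alpha_peak_less:
  assumes "0 < q" "q < 1 / 2"
  shows "alpha_peak q n < q"
proof -
  have a: "0 < alpha q q" "alpha q q < q"
    using alpha_pos[of q q] alpha_less_right[of q q] assms by auto
  obtain x' where x': "alpha q q \<le> x'" "x' < q" "\<forall>x. x' \<le> x \<longrightarrow> x < q \<longrightarrow> 0 < odds_elasticity q n x"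
    using odds_elasticity_pos_near_right_end[OF a assms(2)] by blast
  have "y \<le> x'" if "y \<in> peak_candidates q n" for y
  proof (rule ccontr)
    assume "\<not> y \<le> x'"
    with that x'(1) have "y < q" "odds_elasticity q n y \<le> 0"
      by (auto simp: peak_candidates_def)
    moreover have "0 < odds_elasticity q n y"
      using x'(3)[rule_format, of y] \<open>\<not> y \<le> x'\<close> \<open>y < q\<close> by simp
    ultimately show False
      by simp
  qed
  then have "alpha_peak q n \<le> x'"
    unfolding alpha_peak_def by (intro cSup_least) (auto simp: peak_candidates_def)
  then show ?thesis
    using x'(2) by simp
qed

lemma odds_elasticity_neg_below_peak:
  assumes "0 < q" "q < 1 / 2" "alpha q q \<le> x" "x < alpha_peak q n"
  shows "odds_elasticity q n x < 0"
proof -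
  obtain y where y: "y \<in> peak_candidates q n" "x < y"
    using assms(4) less_cSup_iff[OF _ bdd_above_peak_candidates]
    unfolding alpha_peak_def by (auto simp: peak_candidates_def)
  then have "y < q" "odds_elasticity q n y \<le> 0"
    using assms(3) by (auto simp: peak_candidates_def)
  moreover have "0 < x"
    using alpha_pos[of q q] assms by simp
  ultimately show ?thesis
    using odds_elasticity_strict_mono[of q x y n] assms y(2) by simp
qed

lemma odds_elasticity_pos_above_peak:
  assumes "alpha_peak q n < x" "x < q"
  shows "0 < odds_elasticity q n x"
proof (rule ccontr)
  assume "\<not> ?thesis"
  then have "x \<in> peak_candidates q n"
    using alpha_le_alpha_peak[of q n] assms by (auto simp: peak_candidates_def)
  then have "x \<le> alpha_peak q n"
    unfolding alpha_peak_def by (rule cSup_upper) (rule bdd_above_peak_candidates)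
  then show False
    using assms(1) by simp
qed

lemma alpha_peak_mono_degree:
  assumes "0 < q" "q < 1 / 2" "n \<le> n'"
  shows "alpha_peak q n \<le> alpha_peak q n'"
proof -
  have "0 < alpha q q"
    using alpha_pos[of q q] assms by simp
  have sub: "peak_candidates q n \<subseteq> peak_candidates q n'"
  proof
    fix x assume "x \<in> peak_candidates q n"
    moreover have "odds_elasticity q n' x \<le> odds_elasticity q n x" if "alpha q q < x" "x < q"
      using that \<open>0 < alpha q q\<close> assms by (intro odds_elasticity_antimono_degree) auto
    ultimately show "x \<in> peak_candidates q n'"
      by (auto simp: peak_candidates_def)
  qed
  show ?thesis
    unfolding alpha_peak_def using cSup_subset_mono[OF _ bdd_above_peak_candidates sub]
    by (simp add: peak_candidates_def)
qed

text \<open>The inverse of \<open>p \<mapsto> alpha p q\<close>, read off from \<open>alpha p q * (1 - alpha p q) = p * q\<close>.\<close>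

definition alpha_inv :: "real \<Rightarrow> real \<Rightarrow> real" where
  "alpha_inv q x = x * (1 - x) / q"

lemma alpha_inv_alpha:
  assumes "0 < p" "0 < q" "p + q < 1"
  shows "alpha_inv q (alpha p q) = p"
  using alpha_root[of p q] four_mult_less_one[OF assms] assms(2) by (simp add: alpha_inv_def)

lemma alpha_inv_mono:
  assumes "0 < q" "0 \<le> x1" "x1 \<le> x2" "x1 + x2 \<le> 1"
  shows "alpha_inv q x1 \<le> alpha_inv q x2"
proof -
  have "x2 * (1 - x2) - x1 * (1 - x1) = (x2 - x1) * (1 - x1 - x2)"
    by (simp add: algebra_simps)
  moreover have "0 \<le> (x2 - x1) * (1 - x1 - x2)"
    using assms by (intro mult_nonneg_nonneg) auto
  ultimately show ?thesis
    unfolding alpha_inv_def using assms(1) by (intro divide_right_mono) auto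
qed

lemma alpha_inv_strict_mono:
  assumes "0 < q" "0 \<le> x1" "x1 < x2" "x1 + x2 < 1"
  shows "alpha_inv q x1 < alpha_inv q x2"
proof -
  have "x2 * (1 - x2) - x1 * (1 - x1) = (x2 - x1) * (1 - x1 - x2)"
    by (simp add: algebra_simps)
  moreover have "0 < (x2 - x1) * (1 - x1 - x2)"
    using assms by (intro mult_pos_pos) auto
  ultimately show ?thesis
    unfolding alpha_inv_def using assms(1) by (intro divide_strict_right_mono) auto
qed

definition peak_p :: "real \<Rightarrow> int \<Rightarrow> real" where
  "peak_p q m = alpha_inv q (alpha_peak q (nat m))"

lemma peak_p_bounds:
  assumes "0 < q" "q < 1 / 2"
  shows "q \<le> peak_p q m" and "peak_p q m < 1 - q"
proof -
  have a: "0 < alpha q q" "alpha q q < q" "alpha_inv q (alpha q q) = q"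
    using alpha_pos[of q q] alpha_less_right[of q q] alpha_inv_alpha[of q q] assms by auto
  have peak: "alpha q q \<le> alpha_peak q (nat m)" "alpha_peak q (nat m) < q"
    using alpha_le_alpha_peak alpha_peak_less[OF assms] by blast+
  show "q \<le> peak_p q m"
    unfolding peak_p_def using alpha_inv_mono[of q "alpha q q" "alpha_peak q (nat m)"] a peak assms
    by simp
  have "alpha_inv q q = 1 - q"
    using assms(1) by (simp add: alpha_inv_def)
  then show "peak_p q m < 1 - q"
    unfolding peak_p_def using alpha_inv_strict_mono[of q "alpha_peak q (nat m)" q] a peak assms
    by simp
qed

lemma peak_p_mono:
  assumes "0 < q" "q < 1 / 2" "m \<le> m'"
  shows "peak_p q m \<le> peak_p q m'"
proof -
  have "alpha_peak q (nat m) \<le> alpha_peak q (nat m')"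
    using assms by (intro alpha_peak_mono_degree) auto
  moreover have "0 \<le> alpha_peak q (nat m)"
    using alpha_le_alpha_peak[of q "nat m"] alpha_pos[of q q] assms by simp
  moreover have "alpha_peak q (nat m) < q" "alpha_peak q (nat m') < q"
    using alpha_peak_less[OF assms(1,2)] by blast+
  ultimately show ?thesis
    unfolding peak_p_def using assms by (intro alpha_inv_mono) auto
qed

lemma Vval_strict_mono_below_peak:
  assumes "0 < pi0" "pi0 < 1" "0 < q" "q < 1 / 2" "q < p1" "p1 < p2" "p2 < peak_p q (Nval e)"
  shows "Vval pi0 p1 q e < Vval pi0 p2 q e"
proof -
  define n where "n = nat (Nval e)"
  have "p2 < 1 - q"
    using peak_p_bounds(2)[OF assms(3,4), of "Nval e"] assms(7) by linarith
  then have adm: "0 < p1" "p1 + q < 1" "0 < p2" "p2 + q < 1"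
    using assms by auto
  have alpha12: "alpha q q < alpha p1 q" "alpha p1 q < alpha p2 q" "alpha p2 q < q"
    using alpha_strict_mono_left alpha_less_right[OF adm(3) assms(3) adm(4)] assms by auto
  have "alpha p2 q < alpha_peak q n"
  proof (rule ccontr)
    assume "\<not> ?thesis"
    then have "alpha_inv q (alpha_peak q n) \<le> alpha_inv q (alpha p2 q)"
      using alpha_le_alpha_peak[of q n] alpha_pos[of q q] alpha12 assms(3,4)
      by (intro alpha_inv_mono) auto
    then show False
      using alpha_inv_alpha[OF adm(3) assms(3) adm(4)] assms(7) by (simp add: peak_p_def n_def)
  qed
  then have "odds_in_alpha q n (alpha p2 q) < odds_in_alpha q n (alpha p1 q)"
    using alpha12 alpha_pos[OF adm(1) assms(3) adm(2)] assms(3,4)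
    by (intro odds_in_alpha_strict_antimono odds_elasticity_neg_below_peak) auto
  then have "odds_factor p2 q n < odds_factor p1 q n"
    unfolding odds_factor_eq_odds_in_alpha[OF adm(1) assms(3) adm(2)]
      odds_factor_eq_odds_in_alpha[OF adm(3) assms(3) adm(4)]
    using assms(3) by simp
  then show ?thesis
    using Vval_strict_antimono_odds_factor[OF assms(1,2) adm(3) assms(3) adm(4)] by (simp add: n_def)
qed

lemma Vval_strict_antimono_above_peak:
  assumes "0 < pi0" "pi0 < 1" "0 < q" "q < 1 / 2" "peak_p q (Nval e) < p1" "p1 < p2" "p2 < 1 - q"
  shows "Vval pi0 p2 q e < Vval pi0 p1 q e"
proof -
  define n where "n = nat (Nval e)"
  have "q < p1"
    using peak_p_bounds(1)[OF assms(3,4), of "Nval e"] assms(5) by linarith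
  then have adm: "0 < p1" "p1 + q < 1" "0 < p2" "p2 + q < 1"
    using assms by auto
  have alpha12: "alpha p1 q < alpha p2 q" "alpha p2 q < q"
    using alpha_strict_mono_left alpha_less_right[OF adm(3) assms(3) adm(4)] assms by auto
  have "alpha_peak q n < alpha p1 q"
  proof (rule ccontr)
    assume "\<not> ?thesis"
    then have "alpha_inv q (alpha p1 q) \<le> alpha_inv q (alpha_peak q n)"
      using alpha_pos[OF adm(1) assms(3) adm(2)] alpha_peak_less[OF assms(3,4), of n] assms(4)
      by (intro alpha_inv_mono) auto
    then show False
      using alpha_inv_alpha[OF adm(1) assms(3) adm(2)] assms(5) by (simp add: peak_p_def n_def)
  qed
  then have "odds_in_alpha q n (alpha p1 q) < odds_in_alpha q n (alpha p2 q)"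
    using alpha12 alpha_pos[OF adm(1) assms(3) adm(2)] assms(4)
    by (intro odds_in_alpha_strict_mono odds_elasticity_pos_above_peak) auto
  then have "odds_factor p1 q n < odds_factor p2 q n"
    unfolding odds_factor_eq_odds_in_alpha[OF adm(1) assms(3) adm(2)]
      odds_factor_eq_odds_in_alpha[OF adm(3) assms(3) adm(4)]
    using assms(3) by simp
  then show ?thesis
    using Vval_strict_antimono_odds_factor[OF assms(1,2) adm(1) assms(3) adm(2)] by (simp add: n_def)
qed

theorem proposition7:
  fixes pi0 :: real
  assumes "0 < pi0" and "pi0 < 1"
  shows
    \<comment> \<open>(1) decreasing in kappa, gamma fixed\<close>
    "(\<forall>e \<gamma> \<kappa>1 \<kappa>2. 1 < \<gamma> \<and> 1 < \<kappa>1 \<and> \<kappa>1 < \<kappa>2 \<longrightarrow>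
        Vgk pi0 \<gamma> \<kappa>2 e < Vgk pi0 \<gamma> \<kappa>1 e)
   \<and> \<comment> \<open>(2a) N(e) = 0: decreasing in gamma, kappa fixed\<close>
     (\<forall>e \<kappa> \<gamma>1 \<gamma>2. Nval e = 0 \<and> 1 < \<kappa> \<and> 1 < \<gamma>1 \<and> \<gamma>1 < \<gamma>2 \<longrightarrow>
        Vgk pi0 \<gamma>2 \<kappa> e < Vgk pi0 \<gamma>1 \<kappa> e)
   \<and> \<comment> \<open>(2b) N(e) > 0: increasing in gamma above a threshold depending only on N(e), which tends to 1\<close>
     (\<exists>ghat :: int \<Rightarrow> real.
        (\<forall>e. 0 < Nval e \<longrightarrow> 1 < ghat (Nval e) \<and>
           (\<forall>\<kappa> \<gamma>1 \<gamma>2. 1 < \<kappa> \<and> ghat (Nval e) < \<gamma>1 \<and> \<gamma>1 < \<gamma>2 \<longrightarrow>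
              Vgk pi0 \<gamma>1 \<kappa> e < Vgk pi0 \<gamma>2 \<kappa> e))
        \<and> (ghat \<longlongrightarrow> 1) at_top)
   \<and> \<comment> \<open>(3) single-peakedness in p for fixed q, peak non-decreasing in N(e)\<close>
     (\<exists>phat :: real \<Rightarrow> int \<Rightarrow> real.
        \<forall>q. 0 < q \<and> q < 1/2 \<longrightarrow>
          (\<forall>e. q \<le> phat q (Nval e) \<and> phat q (Nval e) < 1 - q
             \<and> (\<forall>p1 p2. q < p1 \<and> p1 < p2 \<and> p2 < phat q (Nval e) \<longrightarrow>
                   Vval pi0 p1 q e < Vval pi0 p2 q e)
             \<and> (\<forall>p1 p2. phat q (Nval e) < p1 \<and> p1 < p2 \<and> p2 < 1 - q \<longrightarrow>
                   Vval pi0 p2 q e < Vval pi0 p1 q e))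
          \<and> (\<forall>e e'. Nval e \<le> Nval e' \<longrightarrow> phat q (Nval e) \<le> phat q (Nval e')))"
proof (intro conjI)
  show "\<forall>e \<gamma> \<kappa>1 \<kappa>2. 1 < \<gamma> \<and> 1 < \<kappa>1 \<and> \<kappa>1 < \<kappa>2 \<longrightarrow> Vgk pi0 \<gamma> \<kappa>2 e < Vgk pi0 \<gamma> \<kappa>1 e"
    using Vgk_strict_antimono_kappa[OF assms] by blast
  show "\<forall>e \<kappa> \<gamma>1 \<gamma>2. Nval e = 0 \<and> 1 < \<kappa> \<and> 1 < \<gamma>1 \<and> \<gamma>1 < \<gamma>2 \<longrightarrow>
      Vgk pi0 \<gamma>2 \<kappa> e < Vgk pi0 \<gamma>1 \<kappa> e"
    using Vgk_strict_antimono_gamma_if_Nval_zero[OF assms] by blast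
  show "\<exists>ghat :: int \<Rightarrow> real.
      (\<forall>e. 0 < Nval e \<longrightarrow> 1 < ghat (Nval e) \<and>
        (\<forall>\<kappa> \<gamma>1 \<gamma>2. 1 < \<kappa> \<and> ghat (Nval e) < \<gamma>1 \<and> \<gamma>1 < \<gamma>2 \<longrightarrow>
          Vgk pi0 \<gamma>1 \<kappa> e < Vgk pi0 \<gamma>2 \<kappa> e))
      \<and> (ghat \<longlongrightarrow> 1) at_top"
    using gamma_threshold_gt_one Vgk_strict_mono_gamma_above_threshold[OF assms]
      gamma_threshold_tendsto_one by blast
  show "\<exists>phat :: real \<Rightarrow> int \<Rightarrow> real.
      \<forall>q. 0 < q \<and> q < 1/2 \<longrightarrow>
        (\<forall>e. q \<le> phat q (Nval e) \<and> phat q (Nval e) < 1 - q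
           \<and> (\<forall>p1 p2. q < p1 \<and> p1 < p2 \<and> p2 < phat q (Nval e) \<longrightarrow>
                 Vval pi0 p1 q e < Vval pi0 p2 q e)
           \<and> (\<forall>p1 p2. phat q (Nval e) < p1 \<and> p1 < p2 \<and> p2 < 1 - q \<longrightarrow>
                 Vval pi0 p2 q e < Vval pi0 p1 q e))
        \<and> (\<forall>e e'. Nval e \<le> Nval e' \<longrightarrow> phat q (Nval e) \<le> phat q (Nval e'))"
    using peak_p_bounds peak_p_mono Vval_strict_mono_below_peak[OF assms]
      Vval_strict_antimono_above_peak[OF assms] by blast
qed

end
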